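(* Let $f\colon\mathbb{R}^n\to\overline{\mathbb{R}}$ be a lower semicontinuous function and $M\subset\mathbb{R}^n$ a closed set on which $f$ is finite. Fix a point $\bar x\in M$ and a vector $\bar v\in\hat\partial f(\bar x)$ (so that $(\bar x,f(\bar x),\bar v)\in[\hat\partial f]\big|_M$). Suppose there is a sequence of real numbers $m_i\to\infty$ such that for each $i$, $$\bar v\in\operatorname{bd}\bigcup_{x\in M}\partial\Big(f(\cdot)+\tfrac12 m_i|\cdot-\bar x|^2\Big)(x).$$ Then $(\bar x,f(\bar x),\bar v)\in\operatorname{cl}\,[\hat\partial f]\big|_{M^c}$; that is, there exist sequences $x_i\notin M$ and $v_i\in\hat\partial f(x_i)$ such that $(x_i,f(x_i),v_i)\to(\bar x,f(\bar x),\bar v)$.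
   Context: $\overline{\mathbb{R}}=\mathbb{R}\cup\{\pm\infty\}$. For $\bar x$ with $f(\bar x)$ finite, the Fréchet subdifferential $\hat\partial f(\bar x)$ is the set of $v\in\mathbb{R}^n$ with $f(x)\ge f(\bar x)+\langle v,x-\bar x\rangle+o(|x-\bar x|)$; the limiting subdifferential $\partial g(\bar x)$ of a function $g$ is the set of $v$ for which there exist $x_i$, $v_i\in\hat\partial g(x_i)$ with $(x_i,g(x_i),v_i)\to(\bar x,g(\bar x),v)$; both are empty where the function is not finite. The Fréchet subjet is $[\hat\partial f]=\{(x,y,v): y=f(x),\ v\in\hat\partial f(x)\}$, and for $S\subset\mathbb{R}^n$, $[\hat\partial f]\big|_S=[\hat\partial f]\cap(S\times\mathbb{R}\times\mathbb{R}^n)$. $\operatorname{bd}$ and $\operatorname{cl}$ denote boundary and closure, $M^c$ the complement of $M$, and $|\cdot|$ the Euclidean norm. *)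

theory Defs
  imports "HOL-Analysis.Analysis"
begin

definition lsc :: "('a::topological_space \<Rightarrow> ereal) \<Rightarrow> bool" where
  "lsc f \<longleftrightarrow> (\<forall>x. f x \<le> Liminf (at x) f)"

definition frechet_subdiff :: "('a::euclidean_space \<Rightarrow> ereal) \<Rightarrow> 'a \<Rightarrow> 'a set" where
  "frechet_subdiff f x = {v. \<bar>f x\<bar> \<noteq> \<infinity> \<and>
     (\<forall>e>0. \<exists>d>0. \<forall>y. norm (y - x) < d \<longrightarrow>
        f y \<ge> f x + ereal (inner v (y - x) - e * norm (y - x)))}"

definition limiting_subdiff :: "('a::euclidean_space \<Rightarrow> ereal) \<Rightarrow> 'a \<Rightarrow> 'a set" where
  "limiting_subdiff g x = {v. \<bar>g x\<bar> \<noteq> \<infinity> \<and>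
     (\<exists>xs vs. (\<forall>i. vs i \<in> frechet_subdiff g (xs i)) \<and> xs \<longlonglongrightarrow> x \<and>
        (\<lambda>i. g (xs i)) \<longlonglongrightarrow> g x \<and> vs \<longlonglongrightarrow> v)}"

definition frechet_subjet :: "('a::euclidean_space \<Rightarrow> ereal) \<Rightarrow> ('a \<times> real \<times> 'a) set" where
  "frechet_subjet f = {(x, y, v). ereal y = f x \<and> v \<in> frechet_subdiff f x}"

definition frechet_subjet_on :: "('a::euclidean_space \<Rightarrow> ereal) \<Rightarrow> 'a set \<Rightarrow> ('a \<times> real \<times> 'a) set" where
  "frechet_subjet_on f S = frechet_subjet f \<inter> (S \<times> UNIV \<times> UNIV)"

end

theory Submission
  imports Defs
begin

text \<open>Given \<open>\<epsilon>\<close>, the Frechet inequality for \<open>vbar\<close> at \<open>xbar\<close> holds with slack \<open>e\<close> on a ball of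
  radius \<open>r\<close>, and \<open>m\<^sub>i\<close> can be taken large. As \<open>vbar\<close> lies on the boundary of the union of
  limiting subdifferentials, some \<open>w\<close> within \<open>e\<close> of \<open>vbar\<close> lies outside it. By lower
  semicontinuity, \<open>f + m\<^sub>i/2 |\<cdot> - xbar|\<^sup>2 - \<langle>w, \<cdot>\<rangle>\<close> attains its minimum on the closed ball
  at some \<open>z\<close>; comparing with its value at \<open>xbar\<close> and with the Frechet lower bound gives
  \<open>m\<^sub>i |z - xbar| \<le> 4e\<close>, so \<open>z\<close> is interior. Then \<open>w\<close> is a Frechet, hence limiting,
  subgradient of the perturbed function at \<open>z\<close>, which forces \<open>z \<notin> M\<close>, and
  \<open>w - m\<^sub>i (z - xbar)\<close> is a Frechet subgradient of \<open>f\<close> at \<open>z\<close> close to \<open>vbar\<close>.\<close>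

lemma lsc_iff_eventually:
  "lsc f \<longleftrightarrow> (\<forall>x c. c < f x \<longrightarrow> eventually (\<lambda>y. c < f y) (at x))"
  unfolding lsc_def le_Liminf_iff by blast

lemma lsc_add_continuous:
  fixes f :: "'a::topological_space \<Rightarrow> ereal" and q :: "'a \<Rightarrow> real"
  assumes "lsc f" and "continuous_on UNIV q"
  shows "lsc (\<lambda>x. f x + ereal (q x))"
  unfolding lsc_iff_eventually
proof (intro allI impI)
  fix x and c :: ereal
  assume c: "c < f x + ereal (q x)"
  have f_ev: "eventually (\<lambda>y. t < f y) (at x)" if "t < f x" for t
    using assms(1) that unfolding lsc_iff_eventually by blast
  show "eventually (\<lambda>y. c < f y + ereal (q y)) (at x)"
  proof (cases c)
    case MInf
    then have "-\<infinity> < f x" using c by auto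
    from f_ev[OF this] show ?thesis
      by eventually_elim (use MInf in auto)
  next
    case (real c0)
    then have "ereal (c0 - q x) < f x" using c by (cases "f x") auto
    then obtain t where t: "c0 - q x < t" "ereal t < f x"
      using ereal_dense2 by force
    have "(q \<longlongrightarrow> q x) (at x)"
      using assms(2) by (simp add: continuous_on_def)
    then have "eventually (\<lambda>y. dist (q y) (q x) < t - (c0 - q x)) (at x)"
      using t(1) by (intro tendstoD) auto
    with f_ev[OF t(2)] show ?thesis
    proof eventually_elim
      case (elim y)
      then have "ereal c0 < ereal t + ereal (q y)"
        by (auto simp: dist_real_def)
      also have "\<dots> \<le> f y + ereal (q y)"
        using elim(1) by (intro add_right_mono) simp
      finally show ?case using real by simp
    qed
  qed (use c in auto)
qed

lemma lsc_attains_inf: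
  fixes f :: "'a::metric_space \<Rightarrow> ereal"
  assumes "lsc f" and "compact K" and "K \<noteq> {}"
  shows "\<exists>z\<in>K. \<forall>y\<in>K. f z \<le> f y"
proof (rule ccontr)
  assume "\<not> ?thesis"
  then have "\<forall>z\<in>K. (INF y\<in>K. f y) < f z"
    by (meson INF_lower not_le order.strict_trans1)
  then have "\<forall>z\<in>K. \<exists>c. (INF y\<in>K. f y) < c \<and> c < f z"
    using dense by blast
  then obtain c where c: "\<forall>z\<in>K. (INF y\<in>K. f y) < c z \<and> c z < f z"
    by metis
  have "\<forall>z\<in>K. \<exists>d>0. \<forall>y. dist y z < d \<longrightarrow> c z < f y"
  proof
    fix z assume "z \<in> K"
    then have "eventually (\<lambda>y. c z < f y) (at z)"
      using assms(1) c unfolding lsc_iff_eventually by blast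
    then obtain d where "d > 0" "\<forall>y. y \<noteq> z \<and> dist y z < d \<longrightarrow> c z < f y"
      unfolding eventually_at by blast
    then show "\<exists>d>0. \<forall>y. dist y z < d \<longrightarrow> c z < f y"
      using c \<open>z \<in> K\<close> by metis
  qed
  then obtain d where d: "\<forall>z\<in>K. d z > 0 \<and> (\<forall>y. dist y z < d z \<longrightarrow> c z < f y)"
    by metis
  have cover: "K \<subseteq> (\<Union>z\<in>K. ball z (d z))"
    using d by force
  obtain F where F: "F \<subseteq> K" "finite F" "K \<subseteq> (\<Union>z\<in>F. ball z (d z))"
    using compactE_image[OF assms(2) _ cover] by blast
  then have "F \<noteq> {}"
    using assms(3) by blast
  define c0 where "c0 = Min (c ` F)"
  have "c0 \<le> f y" if "y \<in> K" for y
  proof -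
    obtain z where "z \<in> F" "dist y z < d z"
      using F(3) \<open>y \<in> K\<close> by (auto simp: dist_commute)
    then have "c0 \<le> c z" "c z < f y"
      using F d unfolding c0_def by auto
    then show ?thesis by simp
  qed
  then have "c0 \<le> (INF y\<in>K. f y)"
    by (simp add: INF_greatest)
  moreover have "c0 \<in> c ` F"
    unfolding c0_def using F(2) \<open>F \<noteq> {}\<close> by (intro Min_in) auto
  ultimately show False
    using c F(1) by force
qed

lemma frechet_subdiff_of_local_min:
  assumes "\<bar>g z\<bar> \<noteq> \<infinity>" and "\<delta> > 0"
    and "\<And>y. norm (y - z) < \<delta> \<Longrightarrow> g z + ereal (inner w (y - z)) \<le> g y"
  shows "w \<in> frechet_subdiff g z"
  unfolding frechet_subdiff_def
proof (intro CollectI conjI allI impI exI)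
  fix e :: real and y assume "e > 0" "norm (y - z) < \<delta>"
  then have "g z + ereal (inner w (y - z) - e * norm (y - z)) \<le> g z + ereal (inner w (y - z))"
    by (intro add_left_mono) simp
  also have "\<dots> \<le> g y"
    using assms(3) \<open>norm (y - z) < \<delta>\<close> .
  finally show "g z + ereal (inner w (y - z) - e * norm (y - z)) \<le> g y" .
qed (use assms in auto)

lemma frechet_subdiff_subset_limiting_subdiff:
  "frechet_subdiff g x \<subseteq> limiting_subdiff g x"
proof
  fix v assume "v \<in> frechet_subdiff g x"
  then show "v \<in> limiting_subdiff g x"
    unfolding limiting_subdiff_def
    by (intro CollectI conjI exI[of _ "\<lambda>_. x"] exI[of _ "\<lambda>_. v"])
      (simp_all add: frechet_subdiff_def)
qed

lemma norm_diff_power2_expand: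
  fixes a y z :: "'a::real_inner"
  shows "(norm (y - a))\<^sup>2 = (norm (z - a))\<^sup>2 + 2 * inner (z - a) (y - z) + (norm (y - z))\<^sup>2"
  using dot_norm[of "z - a" "y - z"] by simp

lemma quadratic_le_linear_near_zero:
  fixes m e t :: real
  assumes "0 \<le> t" and "t < e / (\<bar>m\<bar> + 1)"
  shows "m * t\<^sup>2 \<le> e * t"
proof -
  have "t * (\<bar>m\<bar> + 1) < e"
    using assms(2) pos_less_divide_eq[of "\<bar>m\<bar> + 1" t e] by simp
  then have "\<bar>m\<bar> * t \<le> e"
    using assms(1) by (simp add: ring_distribs mult.commute)
  have "m * t\<^sup>2 \<le> \<bar>m\<bar> * t * t"
    unfolding power2_eq_square mult.assoc by (rule mult_right_mono) (simp_all add: assms(1))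
  also have "\<dots> \<le> e * t"
    using \<open>\<bar>m\<bar> * t \<le> e\<close> assms(1) by (rule mult_right_mono)
  finally show ?thesis .
qed

lemma frechet_subdiff_remove_quadratic:
  fixes f :: "'a::euclidean_space \<Rightarrow> ereal"
  assumes "w \<in> frechet_subdiff (\<lambda>y. f y + ereal (1/2 * m * (norm (y - a))\<^sup>2)) z"
  shows "w - m *\<^sub>R (z - a) \<in> frechet_subdiff f z"
proof -
  define Q where "Q y = 1/2 * m * (norm (y - a))\<^sup>2" for y
  have Q_expand: "Q y = Q z + m * inner (z - a) (y - z) + 1/2 * m * (norm (y - z))\<^sup>2" for y
    unfolding Q_def norm_diff_power2_expand[of y a z] by (simp add: ring_distribs)
  have "\<bar>f z + ereal (Q z)\<bar> \<noteq> \<infinity>"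
    using assms by (simp add: frechet_subdiff_def Q_def)
  then obtain fz where fz: "f z = ereal fz"
    by (cases "f z") auto
  show ?thesis
    unfolding frechet_subdiff_def
  proof (intro CollectI conjI allI impI)
    fix e :: real assume "e > 0"
    have "\<forall>e>0. \<exists>d>0. \<forall>y. norm (y - z) < d \<longrightarrow>
        f z + ereal (Q z) + ereal (inner w (y - z) - e * norm (y - z)) \<le> f y + ereal (Q y)"
      using assms unfolding frechet_subdiff_def Q_def by blast
    then obtain \<delta> where "\<delta> > 0" and \<delta>: "\<And>y. norm (y - z) < \<delta> \<Longrightarrow>
        f z + ereal (Q z) + ereal (inner w (y - z) - e/2 * norm (y - z)) \<le> f y + ereal (Q y)"
      using \<open>e > 0\<close> half_gt_zero by blast
    show "\<exists>d>0. \<forall>y. norm (y - z) < d \<longrightarrow>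
        f z + ereal (inner (w - m *\<^sub>R (z - a)) (y - z) - e * norm (y - z)) \<le> f y"
    proof (intro exI[of _ "min \<delta> (e / (\<bar>m\<bar> + 1))"] conjI allI impI)
      show "min \<delta> (e / (\<bar>m\<bar> + 1)) > 0"
        using \<open>\<delta> > 0\<close> \<open>e > 0\<close> by simp
      fix y assume y: "norm (y - z) < min \<delta> (e / (\<bar>m\<bar> + 1))"
      then have small: "1/2 * m * (norm (y - z))\<^sup>2 \<le> e/2 * norm (y - z)"
        using quadratic_le_linear_near_zero[of "norm (y - z)" e m] by simp
      have near: "f z + ereal (Q z) + ereal (inner w (y - z) - e/2 * norm (y - z)) \<le> f y + ereal (Q y)"
        using \<delta> y by simp
      show "f z + ereal (inner (w - m *\<^sub>R (z - a)) (y - z) - e * norm (y - z)) \<le> f y"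
      proof (cases "f y")
        case (real fy)
        then have "fz + Q z + inner w (y - z) - e/2 * norm (y - z) \<le> fy + Q y"
          using near fz by simp
        then show ?thesis
          using real fz Q_expand[of y] small by (simp add: inner_diff_left)
      qed (use near fz in auto)
    qed
  qed (use fz in simp)
qed

lemma frechet_subdiff_lower_bound:
  assumes "v \<in> frechet_subdiff f x" and "e > 0"
  obtains r where "r > 0" and "\<And>y. y \<in> cball x r \<Longrightarrow>
    ereal (real_of_ereal (f x) + inner v (y - x) - e * norm (y - x)) \<le> f y"
proof -
  obtain d where "d > 0" and d: "\<And>y. norm (y - x) < d \<Longrightarrow>
      f x + ereal (inner v (y - x) - e * norm (y - x)) \<le> f y"
    using assms unfolding frechet_subdiff_def by blast
  obtain fx where fx: "f x = ereal fx"
    using assms(1) by (cases "f x") (auto simp: frechet_subdiff_def)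
  show thesis
  proof (rule that)
    show "d/2 > 0"
      using \<open>d > 0\<close> by simp
    fix y assume "y \<in> cball x (d/2)"
    then have "norm (y - x) < d"
      using \<open>d > 0\<close> by (simp add: dist_norm norm_minus_commute)
    then show "ereal (real_of_ereal (f x) + inner v (y - x) - e * norm (y - x)) \<le> f y"
      using d fx by (simp add: add_diff_eq)
  qed
qed

lemma perturbed_minimizer_estimates:
  fixes v w d :: "'a::real_inner"
  assumes upper: "fz + 1/2 * m * (norm d)\<^sup>2 - inner w d \<le> fa"
    and lower: "fa + inner v d - e * norm d \<le> fz"
    and wv: "norm (w - v) \<le> e" and "m > 0"
  shows "m * norm d \<le> 4 * e" and "\<bar>fz - fa\<bar> \<le> (norm v + e) * norm d"
proof -
  have "0 \<le> e"
    using wv norm_ge_zero order_trans by blast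
  have "inner (w - v) d \<le> e * norm d"
    using norm_cauchy_schwarz[of "w - v" d] mult_right_mono[OF wv norm_ge_zero[of d]] by linarith
  then have "norm d * (m * norm d) \<le> norm d * (4 * e)"
    using upper lower inner_diff_left[of w v d] by (simp add: power2_eq_square algebra_simps)
  then show "m * norm d \<le> 4 * e"
    using \<open>0 \<le> e\<close> by (cases "d = 0") simp_all
  have "norm w \<le> norm v + e"
    using norm_triangle_ineq[of v "w - v"] wv by simp
  then have "inner w d \<le> (norm v + e) * norm d"
    using norm_cauchy_schwarz[of w d] mult_right_mono[of _ _ "norm d"] by fastforce
  moreover have "\<bar>inner v d\<bar> \<le> norm v * norm d"
    by (rule Cauchy_Schwarz_ineq2)
  moreover have "0 \<le> 1/2 * m * (norm d)\<^sup>2" "0 \<le> e * norm d"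
    using \<open>m > 0\<close> \<open>0 \<le> e\<close> by simp_all
  ultimately show "\<bar>fz - fa\<bar> \<le> (norm v + e) * norm d"
    using upper lower by (simp add: abs_le_iff distrib_right)
qed

lemma perturbed_frechet_subgradient_near:
  fixes f :: "'a::euclidean_space \<Rightarrow> ereal"
  assumes "lsc f" and fa: "f xbar = ereal fa"
    and lower: "\<And>y. y \<in> cball xbar r \<Longrightarrow>
      ereal (fa + inner v (y - xbar) - e * norm (y - xbar)) \<le> f y"
    and wv: "norm (w - v) \<le> e" and "m > 0" and "4 * e < m * r"
  obtains z fz where "f z = ereal fz" and "m * norm (z - xbar) \<le> 4 * e"
    and "\<bar>fz - fa\<bar> \<le> (norm v + e) * norm (z - xbar)"
    and "w \<in> frechet_subdiff (\<lambda>y. f y + ereal (1/2 * m * (norm (y - xbar))\<^sup>2)) z"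
proof -
  define g where "g y = f y + ereal (1/2 * m * (norm (y - xbar))\<^sup>2)" for y
  define h where "h y = g y + ereal (- inner w (y - xbar))" for y
  have "lsc h"
    unfolding h_def g_def by (intro lsc_add_continuous assms(1) continuous_intros)
  have "0 < m * r"
    using wv \<open>4 * e < m * r\<close> norm_ge_zero[of "w - v"] by linarith
  then have "cball xbar r \<noteq> {}"
    using \<open>m > 0\<close> zero_less_mult_pos by fastforce
  then obtain z where z_ball: "z \<in> cball xbar r"
    and z_min: "\<And>y. y \<in> cball xbar r \<Longrightarrow> h z \<le> h y"
    using lsc_attains_inf[OF \<open>lsc h\<close> compact_cball] by blast
  define \<rho> where "\<rho> = norm (z - xbar)"
  have "h z \<le> ereal fa"
    using z_min[of xbar] \<open>cball xbar r \<noteq> {}\<close> by (simp add: h_def g_def fa)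
  moreover have "ereal (fa + inner v (z - xbar) - e * \<rho>) \<le> f z"
    unfolding \<rho>_def using z_ball by (rule lower)
  ultimately obtain fz where fz: "f z = ereal fz"
    and upper: "fz + 1/2 * m * \<rho>\<^sup>2 - inner w (z - xbar) \<le> fa"
    and low: "fa + inner v (z - xbar) - e * \<rho> \<le> fz"
    by (cases "f z") (auto simp: h_def g_def \<rho>_def)
  note estimates = perturbed_minimizer_estimates[OF upper[unfolded \<rho>_def] low[unfolded \<rho>_def]
      wv \<open>m > 0\<close>, folded \<rho>_def]
  have "m * \<rho> < m * r"
    using estimates(1) \<open>4 * e < m * r\<close> by linarith
  then have "\<rho> < r"
    using \<open>m > 0\<close> by simp
  have "w \<in> frechet_subdiff g z"
  proof (rule frechet_subdiff_of_local_min)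
    have gz: "g z = ereal (fz + 1/2 * m * \<rho>\<^sup>2)"
      by (simp add: g_def fz \<rho>_def)
    then show "\<bar>g z\<bar> \<noteq> \<infinity>"
      by simp
    show "r - \<rho> > 0"
      using \<open>\<rho> < r\<close> by simp
    fix y assume "norm (y - z) < r - \<rho>"
    then have "y \<in> cball xbar r"
      using norm_triangle_ineq[of "y - z" "z - xbar"]
      by (simp add: dist_norm norm_minus_commute \<rho>_def)
    then have "h z \<le> h y"
      by (rule z_min)
    then show "g z + ereal (inner w (y - z)) \<le> g y"
      by (cases "g y") (auto simp: h_def gz inner_diff_right \<rho>_def)
  qed
  then show thesis
    using that fz estimates unfolding g_def \<rho>_def by blast
qed

lemma frechet_subjet_outside_near:
  fixes f :: "'a::euclidean_space \<Rightarrow> ereal"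
  assumes "lsc f" and fa: "f xbar = ereal fa"
    and lower: "\<And>y. y \<in> cball xbar r \<Longrightarrow>
      ereal (fa + inner v (y - xbar) - e * norm (y - xbar)) \<le> f y"
    and "e > 0" and "1 \<le> m" and "4 * e < m * r"
    and v_frontier: "v \<in> frontier (\<Union>x\<in>M.
      limiting_subdiff (\<lambda>z. f z + ereal (1/2 * m * (norm (z - xbar))\<^sup>2)) x)"
  obtains z fz u where "(z, fz, u) \<in> frechet_subjet_on f (- M)"
    and "norm (z - xbar) \<le> 4 * e" and "\<bar>fz - fa\<bar> \<le> 4 * e * (norm v + e)"
    and "norm (u - v) \<le> 5 * e"
proof -
  obtain w where w_out: "w \<notin> (\<Union>x\<in>M.
      limiting_subdiff (\<lambda>z. f z + ereal (1/2 * m * (norm (z - xbar))\<^sup>2)) x)"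
    and "dist v w < e"
    using v_frontier \<open>e > 0\<close> unfolding frontier_straddle by blast
  then have wv: "norm (w - v) \<le> e"
    by (simp add: dist_norm norm_minus_commute)
  have "m > 0"
    using \<open>1 \<le> m\<close> by simp
  obtain z fz where fz: "f z = ereal fz" and m_dist: "m * norm (z - xbar) \<le> 4 * e"
    and fz_fa: "\<bar>fz - fa\<bar> \<le> (norm v + e) * norm (z - xbar)"
    and w_sub: "w \<in> frechet_subdiff (\<lambda>y. f y + ereal (1/2 * m * (norm (y - xbar))\<^sup>2)) z"
    using perturbed_frechet_subgradient_near[OF assms(1) fa lower wv \<open>m > 0\<close> \<open>4 * e < m * r\<close>] .
  have "z \<notin> M"
    using w_out w_sub frechet_subdiff_subset_limiting_subdiff by blast
  define u where "u = w - m *\<^sub>R (z - xbar)"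
  have "u \<in> frechet_subdiff f z"
    unfolding u_def using w_sub by (rule frechet_subdiff_remove_quadratic)
  with fz \<open>z \<notin> M\<close> have "(z, fz, u) \<in> frechet_subjet_on f (- M)"
    by (simp add: frechet_subjet_on_def frechet_subjet_def)
  moreover have z_dist: "norm (z - xbar) \<le> 4 * e"
    using m_dist mult_right_mono[OF \<open>1 \<le> m\<close> norm_ge_zero[of "z - xbar"]] by linarith
  moreover have "\<bar>fz - fa\<bar> \<le> 4 * e * (norm v + e)"
  proof -
    have "(norm v + e) * norm (z - xbar) \<le> (norm v + e) * (4 * e)"
      using z_dist \<open>e > 0\<close> by (intro mult_left_mono) simp_all
    then show ?thesis
      using fz_fa by (simp add: mult.commute)
  qed
  moreover have "norm (u - v) \<le> 5 * e"
  proof -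
    have "u - v = (w - v) - m *\<^sub>R (z - xbar)"
      by (simp add: u_def)
    then have "norm (u - v) \<le> norm (w - v) + norm (m *\<^sub>R (z - xbar))"
      by (metis norm_triangle_ineq4)
    also have "norm (m *\<^sub>R (z - xbar)) = m * norm (z - xbar)"
      using \<open>m > 0\<close> by simp
    finally show ?thesis
      using wv m_dist by linarith
  qed
  ultimately show thesis
    using that by blast
qed

lemma dist_Pair_le_add: "dist (a, b) (c, d) \<le> dist a c + dist b d"
  unfolding dist_Pair_Pair by (rule sqrt_sum_squares_le_sum) simp_all

theorem lemma3p2:
  fixes f :: "'a::euclidean_space \<Rightarrow> ereal"
    and M :: "'a set" and xbar vbar :: 'a and m :: "nat \<Rightarrow> real"
  assumes "lsc f"
    and "closed M"
    and "\<forall>x\<in>M. \<bar>f x\<bar> \<noteq> \<infinity>"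
    and "xbar \<in> M"
    and "vbar \<in> frechet_subdiff f xbar"
    and "filterlim m at_top sequentially"
    and "\<forall>i. vbar \<in> frontier (\<Union>x\<in>M.
            limiting_subdiff (\<lambda>z. f z + ereal (1/2 * m i * (norm (z - xbar))\<^sup>2)) x)"
  shows "(xbar, real_of_ereal (f xbar), vbar) \<in> closure (frechet_subjet_on f (- M))"
proof -
  obtain fa where fa: "f xbar = ereal fa"
    using assms(3,4) by (cases "f xbar") auto
  have "\<exists>y\<in>frechet_subjet_on f (- M). dist y (xbar, fa, vbar) < \<epsilon>" if "\<epsilon> > 0" for \<epsilon>
  proof -
    define e where "e = min 1 (\<epsilon> / (14 + 4 * norm vbar))"
    have "e > 0" "e \<le> 1" "e \<le> \<epsilon> / (14 + 4 * norm vbar)"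
      using \<open>\<epsilon> > 0\<close> by (simp_all add: e_def add_pos_nonneg)
    then have e_small: "e * (13 + 4 * norm vbar) < \<epsilon>"
      by (simp add: pos_le_divide_eq add_pos_nonneg algebra_simps)
    obtain r where "r > 0" and lower: "\<And>y. y \<in> cball xbar r \<Longrightarrow>
        ereal (fa + inner vbar (y - xbar) - e * norm (y - xbar)) \<le> f y"
      using frechet_subdiff_lower_bound[OF assms(5) \<open>e > 0\<close>] fa by auto
    obtain i where "max 1 (4 * e / r) < m i"
      using assms(6) unfolding filterlim_at_top_dense eventually_sequentially by blast
    then have "1 \<le> m i" and "4 * e < m i * r"
      using \<open>r > 0\<close> by (simp_all add: pos_divide_less_eq)
    then obtain z fz u where mem: "(z, fz, u) \<in> frechet_subjet_on f (- M)"
      and "norm (z - xbar) \<le> 4 * e" "\<bar>fz - fa\<bar> \<le> 4 * e * (norm vbar + e)"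
      and "norm (u - vbar) \<le> 5 * e"
      using frechet_subjet_outside_near[OF assms(1) fa lower \<open>e > 0\<close> _ _ assms(7)[rule_format]]
      by blast
    moreover have "4 * e * (norm vbar + e) \<le> 4 * e * (norm vbar + 1)"
      using \<open>e > 0\<close> \<open>e \<le> 1\<close> by simp
    ultimately have "dist z xbar + (dist fz fa + dist u vbar) \<le> e * (13 + 4 * norm vbar)"
      by (simp add: dist_norm dist_real_def algebra_simps)
    then have "dist (z, fz, u) (xbar, fa, vbar) < \<epsilon>"
      using dist_Pair_le_add[of z "(fz, u)" xbar "(fa, vbar)"] dist_Pair_le_add[of fz u fa vbar]
        e_small by linarith
    with mem show ?thesis
      by blast
  qed
  then show ?thesis
    by (simp add: fa closure_approachable)
qed

end
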